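(* Let $P\in N_1$ be a sum of $4$ monomials, not necessarily distinct (i.e. $P(1)=4$). Then $P$ has unique factorisation inside $N_1$: any two factorisations of $P$ into irreducible elements of $N_1$ coincide up to the order of the factors.
   Context: $N_1=\mathbb{Z}_{\ge0}[X]$ is the semiring of univariate polynomials with nonnegative integer coefficients. An element $Q\neq0,1$ of $N_1$ is irreducible if in every factorisation $Q=ST$ with $S,T\in N_1$ one of $S,T$ is $1$. *)

theory Defs
  imports "HOL-Computational_Algebra.Polynomial" "HOL-Library.Multiset"
begin

text \<open>N_1 = Z_{\<ge>0}[X] is modelled by the type nat poly.
 Irreducibility exactly as in the paper: Q \<noteq> 0, Q \<noteq> 1, and in every
 factorisation Q = S T inside N_1 one of S, T is 1.\<close>

definition irreducible_N1 :: "nat poly \<Rightarrow> bool" where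
  "irreducible_N1 Q \<longleftrightarrow> Q \<noteq> 0 \<and> Q \<noteq> 1 \<and> (\<forall>S T. Q = S * T \<longrightarrow> S = 1 \<or> T = 1)"

end

theory Submission
  imports Defs
begin

text \<open>Evaluation at 1 is a semiring homomorphism to \<open>\<nat>\<close>, and \<open>P(1) + deg P\<close> drops under
  proper factorisation, which gives existence. For uniqueness, \<open>X\<close> is the only irreducible with
  vanishing constant term and powers of \<open>X\<close> cancel, so it suffices to compare the \<open>X\<close>-free parts.
  Every other irreducible has value at least 2 at 1, so an \<open>X\<close>-free factorisation of a polynomial
  of value 4 is either a single irreducible or a product of two polynomials of value 2, i.e. of two
  binomials \<open>1 + X\<^sup>a\<close>, \<open>1 + X\<^sup>b\<close>; the latter product is not irreducible, and its exponents
  \<open>{0, a, b, a + b}\<close> determine \<open>{a, b}\<close>.\<close>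

lemma poly_one_eq_0_iff: "poly (p :: nat poly) 1 = 0 \<longleftrightarrow> p = 0"
  by (induction p rule: pCons_induct) auto

lemma poly_one_eq_1_imp_monom: "poly (p :: nat poly) 1 = 1 \<Longrightarrow> \<exists>k. p = monom 1 k"
proof (induction p rule: pCons_induct)
  case (pCons a q)
  then have sum: "a + poly q 1 = 1" by simp
  show ?case
  proof (cases "a = 0")
    case True
    with pCons sum obtain k where "q = monom 1 k" by auto
    with True have "pCons a q = monom 1 (Suc k)" by (simp add: monom_Suc)
    then show ?thesis ..
  next
    case False
    with sum have "a = 1" "poly q 1 = 0" by arith+
    then have "a = 1" "q = 0" by (simp_all only: poly_one_eq_0_iff)
    then have "pCons a q = monom 1 0" by (simp add: monom_0)
    then show ?thesis ..
  qed
qed simp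

lemma poly_one_eq_1_imp_eq_1:
  assumes "poly (p :: nat poly) 1 = 1" "coeff p 0 \<noteq> 0"
  shows "p = 1"
proof -
  obtain k where k: "p = monom 1 k" using poly_one_eq_1_imp_monom assms(1) by blast
  with assms(2) have "k = 0" by (auto simp: coeff_monom split: if_splits)
  with k show ?thesis by (simp del: One_nat_def)
qed

lemma poly_one_eq_2_imp_binomial:
  assumes "poly (p :: nat poly) 1 = 2" "coeff p 0 \<noteq> 0"
  shows "\<exists>n. p = 1 + monom 1 n"
proof -
  obtain c q where p: "p = pCons c q" by (cases p)
  with assms have "c + poly q 1 = 2" and "c \<noteq> 0" by auto
  then consider "c = 1" "poly q 1 = 1" | "c = 2" "poly q 1 = 0" by arith
  then show ?thesis
  proof cases
    case 1
    then obtain k where "q = monom 1 k" using poly_one_eq_1_imp_monom by blast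
    with p 1 have "p = 1 + monom 1 (Suc k)" by (simp add: monom_Suc one_pCons)
    then show ?thesis ..
  next
    case 2
    then have "q = 0" by (simp only: poly_one_eq_0_iff)
    with p 2 have "p = 1 + monom 1 0" by (simp add: monom_0 one_pCons)
    then show ?thesis ..
  qed
qed

lemma poly_one_degree_less_mult:
  fixes S T :: "nat poly"
  assumes "S * T \<noteq> 0" "T \<noteq> 1"
  shows "poly S 1 + degree S < poly (S * T) 1 + degree (S * T)"
proof -
  have "S \<noteq> 0" "T \<noteq> 0" using assms(1) by auto
  then have deg: "degree (S * T) = degree S + degree T" and "poly S 1 \<noteq> 0" "poly T 1 \<noteq> 0"
    by (simp_all only: degree_mult_eq poly_one_eq_0_iff not_False_eq_True)
  show ?thesis
  proof (cases "poly T 1 = 1")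
    case True
    then obtain k where T: "T = monom 1 k" using poly_one_eq_1_imp_monom by blast
    with assms(2) have "k \<noteq> 0" by (metis monom_eq_1)
    with T True deg show ?thesis by (simp add: degree_monom_eq)
  next
    case False
    with \<open>poly T 1 \<noteq> 0\<close> \<open>poly S 1 \<noteq> 0\<close> have "poly S 1 < poly S 1 * poly T 1" by simp
    with deg show ?thesis by (simp only: poly_mult)
  qed
qed

lemma irreducible_N1_factorisation_exists:
  fixes p :: "nat poly"
  assumes "p \<noteq> 0"
  shows "\<exists>A. (\<forall>q\<in>#A. irreducible_N1 q) \<and> prod_mset A = p"
  using assms
proof (induction p rule: measure_induct_rule[of "\<lambda>p. poly p 1 + degree p"])
  case (less p)
  consider "p = 1" | "irreducible_N1 p" | S T where "p = S * T" "S \<noteq> 1" "T \<noteq> 1"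
    using less.prems unfolding irreducible_N1_def by blast
  then show ?case
  proof cases
    case 1
    then show ?thesis by (intro exI[of _ "{#}"]) simp
  next
    case 2
    then show ?thesis by (intro exI[of _ "{#p#}"]) simp
  next
    case (3 S T)
    with less.prems have "S \<noteq> 0" "T \<noteq> 0" by auto
    moreover have "poly S 1 + degree S < poly p 1 + degree p" "poly T 1 + degree T < poly p 1 + degree p"
      using poly_one_degree_less_mult[of S T] poly_one_degree_less_mult[of T S] 3 less.prems
      by (simp_all add: mult.commute)
    ultimately obtain AS AT where "\<forall>q\<in>#AS. irreducible_N1 q" "prod_mset AS = S"
      "\<forall>q\<in>#AT. irreducible_N1 q" "prod_mset AT = T"
      using less.IH by meson
    with 3 show ?thesis by (intro exI[of _ "AS + AT"]) auto
  qed
qed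

lemma pCons_0_eq_X_mult: "pCons 0 q = monom (1 :: nat) 1 * q"
  using smult_1_left[of q] by (simp add: monom_Suc monom_0)

lemma irreducible_N1_coeff_0_eq_0:
  assumes "irreducible_N1 q" "coeff q 0 = 0"
  shows "q = monom 1 1"
proof -
  obtain c r where "q = pCons c r" by (cases q)
  with assms(2) have "q = monom 1 1 * r" by (simp add: pCons_0_eq_X_mult)
  moreover have "monom (1 :: nat) 1 \<noteq> 1" by (simp add: monom_eq_1_iff)
  ultimately show ?thesis using assms(1) unfolding irreducible_N1_def by fastforce
qed

lemma irreducible_N1_poly_one_ge_2:
  assumes "irreducible_N1 q" "coeff q 0 \<noteq> 0"
  shows "2 \<le> poly q 1"
proof -
  from assms(1) have "q \<noteq> 0" "q \<noteq> 1" unfolding irreducible_N1_def by auto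
  with assms(2) have "poly q 1 \<noteq> 0" "poly q 1 \<noteq> 1"
    using poly_one_eq_0_iff poly_one_eq_1_imp_eq_1 by blast+
  then show ?thesis by linarith
qed

lemma irreducible_N1_mult_not_irreducible:
  assumes "irreducible_N1 S" "irreducible_N1 T"
  shows "\<not> irreducible_N1 (S * T)"
  using assms unfolding irreducible_N1_def by blast

lemma coeff_0_prod_mset_neq_0:
  assumes "\<forall>q\<in>#A. coeff q 0 \<noteq> (0 :: nat)"
  shows "coeff (prod_mset A) 0 \<noteq> 0"
  using assms by (induction A) (auto simp: coeff_mult_0)

lemma monom_mult_cancel:
  fixes R R' :: "nat poly"
  assumes eq: "monom 1 m * R = monom 1 m' * R'" and "coeff R 0 \<noteq> 0" "coeff R' 0 \<noteq> 0"
  shows "m = m'" "R = R'"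
proof -
  have coeffs: "coeff (monom 1 m * R) k = coeff (monom 1 m' * R') k" for k
    using eq by simp
  show "m = m'"
  proof (rule ccontr)
    assume "m \<noteq> m'"
    then consider "m < m'" | "m' < m" by linarith
    then show False
      by cases (use coeffs[of m] coeffs[of m'] assms(2,3) in \<open>simp_all add: coeff_monom_mult\<close>)
  qed
  show "R = R'"
  proof (rule poly_eqI)
    show "coeff R k = coeff R' k" for k
      using coeffs[of "k + m"] \<open>m = m'\<close> by (simp add: coeff_monom_mult)
  qed
qed

lemma prod_mset_ge_2_eq_4:
  fixes M :: "nat multiset"
  assumes ge: "\<forall>x\<in>#M. 2 \<le> x" and prod: "prod_mset M = 4"
  shows "M = {#4#} \<or> M = {#2, 2#}"
proof -
  have "2 ^ size M \<le> prod_mset M"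
    using ge by (induction M) (auto intro: mult_mono)
  have "size M < 3"
  proof (rule ccontr)
    assume "\<not> size M < 3"
    then have "(2 :: nat) ^ 3 \<le> 2 ^ size M" by (intro power_increasing) auto
    with \<open>2 ^ size M \<le> prod_mset M\<close> prod show False by simp
  qed
  then consider "size M = 0" | "size M = 1" | "size M = 2" by linarith
  then show ?thesis
  proof cases
    case 1
    with prod show ?thesis by simp
  next
    case 2
    with prod show ?thesis using size_1_singleton_mset by fastforce
  next
    case 3
    then obtain x N where "M = add_mset x N" "size N = 1"
      using size_eq_Suc_imp_eq_union[of M 1] by auto
    then obtain y where M: "M = {#x, y#}" using size_1_singleton_mset by blast
    with ge prod have "x * y = 4" "2 \<le> x" "2 \<le> y" by auto
    then have "2 * y \<le> 4" "x * 2 \<le> 4" by (metis mult_le_mono1 mult_le_mono2)+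
    with \<open>2 \<le> x\<close> \<open>2 \<le> y\<close> have "x = 2" "y = 2" by linarith+
    with M show ?thesis by simp
  qed
qed

lemma binomial_mult_eq:
  "(1 + monom (1 :: nat) a) * (1 + monom 1 b) = 1 + monom 1 a + monom 1 b + monom 1 (a + b)"
  using smult_1_left by (simp add: algebra_simps mult_monom)

lemma binomial_mult_eq_imp_mset_eq:
  assumes "(1 + monom (1 :: nat) a) * (1 + monom 1 b) = (1 + monom 1 c) * (1 + monom 1 d)"
  shows "{#a, b#} = {#c, d#}"
proof -
  have coeff_eq: "coeff ((1 + monom (1 :: nat) x) * (1 + monom 1 y)) n = count {#0, x, y, x + y#} n"
    for x y n
    unfolding binomial_mult_eq by (simp add: coeff_monom)
  have "{#0, a, b, a + b#} = {#0, c, d, c + d#}"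
    by (rule multiset_eqI) (simp only: coeff_eq[symmetric] assms)
  then have exps: "{#a, b, a + b#} = {#c, d, c + d#}" by simp
  then have "sum_mset {#a, b, a + b#} = sum_mset {#c, d, c + d#}" by simp
  then have "a + b = c + d" by simp
  with exps show ?thesis by (simp add: add_mset_commute)
qed

lemma irreducible_N1_factors_poly_one_eq_4:
  assumes irr: "\<forall>q\<in>#A. irreducible_N1 q \<and> coeff q 0 \<noteq> 0" and four: "poly (prod_mset A) 1 = 4"
  shows "(\<exists>r. A = {#r#}) \<or> (\<exists>a b. A = {#1 + monom 1 a, 1 + monom 1 b#})"
proof -
  let ?V = "image_mset (\<lambda>q. poly q 1) A"
  have "\<forall>x\<in>#?V. 2 \<le> x" using irr irreducible_N1_poly_one_ge_2 by auto
  moreover have "prod_mset ?V = 4" using four poly_prod_mset[of "\<lambda>q. q" A 1] by simp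
  ultimately consider "?V = {#4#}" | "?V = {#2, 2#}" using prod_mset_ge_2_eq_4 by blast
  then show ?thesis
  proof cases
    case 1
    then show ?thesis by (auto dest!: msed_map_invR)
  next
    case 2
    then obtain s t where A: "A = {#s, t#}" and "poly s 1 = 2" "poly t 1 = 2"
      by (auto dest!: msed_map_invR)
    moreover have "coeff s 0 \<noteq> 0" "coeff t 0 \<noteq> 0" using irr A by auto
    ultimately obtain a b where "s = 1 + monom 1 a" "t = 1 + monom 1 b"
      using poly_one_eq_2_imp_binomial by meson
    with A show ?thesis by blast
  qed
qed

lemma irreducible_N1_factorisation_unique_coeff_0:
  assumes A: "\<forall>q\<in>#A. irreducible_N1 q \<and> coeff q 0 \<noteq> 0" and B: "\<forall>q\<in>#B. irreducible_N1 q \<and> coeff q 0 \<noteq> 0"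
    and eq: "prod_mset A = prod_mset B" and four: "poly (prod_mset A) 1 = 4"
  shows "A = B"
  using irreducible_N1_factors_poly_one_eq_4[OF A four]
    irreducible_N1_factors_poly_one_eq_4[OF B four[unfolded eq]]
proof (elim disjE exE)
  fix r r' assume "A = {#r#}" "B = {#r'#}"
  with eq show ?thesis by simp
next
  fix r a b assume r: "A = {#r#}" and ab: "B = {#1 + monom 1 a, 1 + monom 1 b#}"
  with A B have "irreducible_N1 r" "irreducible_N1 (1 + monom 1 a)" "irreducible_N1 (1 + monom 1 b)"
    by simp_all
  moreover from eq r ab have "r = (1 + monom 1 a) * (1 + monom 1 b)" by simp
  ultimately show ?thesis using irreducible_N1_mult_not_irreducible by blast
next
  fix r a b assume ab: "A = {#1 + monom 1 a, 1 + monom 1 b#}" and r: "B = {#r#}"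
  with A B have "irreducible_N1 r" "irreducible_N1 (1 + monom 1 a)" "irreducible_N1 (1 + monom 1 b)"
    by simp_all
  moreover from eq r ab have "r = (1 + monom 1 a) * (1 + monom 1 b)" by simp
  ultimately show ?thesis using irreducible_N1_mult_not_irreducible by blast
next
  fix a b c d assume A: "A = {#1 + monom 1 a, 1 + monom 1 b#}" and B: "B = {#1 + monom 1 c, 1 + monom 1 d#}"
  with eq have "{#a, b#} = {#c, d#}" by (intro binomial_mult_eq_imp_mset_eq) simp
  moreover have "A = image_mset (\<lambda>n. 1 + monom 1 n) {#a, b#}" "B = image_mset (\<lambda>n. 1 + monom 1 n) {#c, d#}"
    using A B by simp_all
  ultimately show ?thesis by simp
qed

lemma irreducible_N1_factorisation_split_X:
  fixes A :: "nat poly multiset"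
  assumes "\<forall>q\<in>#A. irreducible_N1 q"
  shows "A = replicate_mset (count A (monom 1 1)) (monom 1 1) + {#q \<in># A. q \<noteq> monom 1 1#}"
    and "prod_mset A = monom 1 (count A (monom 1 1)) * prod_mset {#q \<in># A. q \<noteq> monom 1 1#}"
    and "\<forall>q\<in>#{#q \<in># A. q \<noteq> monom 1 1#}. irreducible_N1 q \<and> coeff q 0 \<noteq> 0"
proof -
  show split: "A = replicate_mset (count A (monom 1 1)) (monom 1 1) + {#q \<in># A. q \<noteq> monom 1 1#}"
    using multiset_partition[where M = A and P = "\<lambda>q. q = monom 1 1"]
    unfolding filter_eq_replicate_mset .
  show "prod_mset A = monom 1 (count A (monom 1 1)) * prod_mset {#q \<in># A. q \<noteq> monom 1 1#}"
    by (subst split) (simp add: monom_power)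
  show "\<forall>q\<in>#{#q \<in># A. q \<noteq> monom 1 1#}. irreducible_N1 q \<and> coeff q 0 \<noteq> 0"
    using assms irreducible_N1_coeff_0_eq_0 by auto
qed

theorem mainTheorem8:
  fixes P :: "nat poly"
  assumes "poly P 1 = 4"
  shows "(\<exists>A :: nat poly multiset. (\<forall>q\<in>#A. irreducible_N1 q) \<and> prod_mset A = P) \<and>
         (\<forall>A B :: nat poly multiset.
            (\<forall>q\<in>#A. irreducible_N1 q) \<longrightarrow> (\<forall>q\<in>#B. irreducible_N1 q) \<longrightarrow>
            prod_mset A = P \<longrightarrow> prod_mset B = P \<longrightarrow> A = B)"
proof (intro conjI allI impI)
  from assms have "P \<noteq> 0" by auto
  then show "\<exists>A. (\<forall>q\<in>#A. irreducible_N1 q) \<and> prod_mset A = P"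
    by (rule irreducible_N1_factorisation_exists)
next
  fix A B :: "nat poly multiset"
  assume irr: "\<forall>q\<in>#A. irreducible_N1 q" "\<forall>q\<in>#B. irreducible_N1 q"
    and prod: "prod_mset A = P" "prod_mset B = P"
  define X :: "nat poly" where "X = monom 1 1"
  define A' B' where "A' = {#q \<in># A. q \<noteq> X#}" and "B' = {#q \<in># B. q \<noteq> X#}"
  note split_A = irreducible_N1_factorisation_split_X[OF irr(1), folded X_def, folded A'_def]
  note split_B = irreducible_N1_factorisation_split_X[OF irr(2), folded X_def, folded B'_def]
  have coeff_A': "coeff (prod_mset A') 0 \<noteq> 0" and coeff_B': "coeff (prod_mset B') 0 \<noteq> 0"
    using split_A(3) split_B(3) by (meson coeff_0_prod_mset_neq_0)+
  have "monom 1 (count A X) * prod_mset A' = monom 1 (count B X) * prod_mset B'"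
    using split_A(2) split_B(2) prod by simp
  note cancel = monom_mult_cancel[OF this coeff_A' coeff_B']
  have "poly (prod_mset A') 1 = 4"
    using assms unfolding prod(1)[symmetric] split_A(2) by (simp add: poly_monom)
  with split_A(3) split_B(3) cancel(2) have "A' = B'"
    by (rule irreducible_N1_factorisation_unique_coeff_0)
  have "A = replicate_mset (count A X) X + A'" by (rule split_A(1))
  also have "\<dots> = replicate_mset (count B X) X + B'" by (simp only: cancel(1) \<open>A' = B'\<close>)
  also have "\<dots> = B" by (rule split_B(1)[symmetric])
  finally show "A = B" .
qed

end
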